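(* Let $\mathcal{M}=(\mathcal{M}_t)_{t\ge0}$ be a smooth Mallows process on $\mathcal{S}_n$. Then $\mathcal{G}_\mathcal{M}$ is a subgraph of $\mathcal{H}_n$, and $\mathcal{T}^a\subseteq\langle\mathcal{G}_\mathcal{M}\rangle\subseteq\mathcal{T}$. Moreover, if $\mathcal{M}$ is regular, then $\mathcal{G}_\mathcal{M}=\mathcal{H}_n$ and $\langle\mathcal{G}_\mathcal{M}\rangle=\langle\mathcal{H}_n\rangle=\mathcal{T}$.
   Context: $\mathcal{S}_n$, $\mathrm{Inv}$, $\mathrm{Inv}_j$ as usual: $\mathrm{Inv}(\sigma)=|\{i<j:\sigma(i)>\sigma(j)\}|$, $\mathrm{Inv}_j(\sigma)=|\{i\in[j-1]:\sigma(i)>\sigma(j)\}|$. Composition: $(\sigma\cdot\sigma')(i)=\sigma(\sigma'(i))$. The Mallows distribution $\pi_{n,q}(\sigma)=q^{\mathrm{Inv}(\sigma)}/\prod_{k=1}^n\sum_{\ell=0}^{k-1}q^\ell$ ($0^0=1$). A Mallows process is an $\mathcal{S}_n$-valued càdlàg process with $\mathcal{M}_t\sim\pi_{n,t}$ for all $t\ge0$. It is strongly monotone if $t\mapsto\mathrm{Inv}_j(\mathcal{M}_t)$ is nondecreasing for each $j\in[n]$; smooth if strongly monotone and $\mathrm{Inv}(\mathcal{M}_t)\le\mathrm{Inv}(\mathcal{M}_{t-})+1$ for all $t$; regular if smooth and the processes $(\mathrm{Inv}_j(\mathcal{M}_t))_{t\ge0}$, $j\in[n]$, are mutually independent. The transition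 graph $\mathcal{G}_\mathcal{M}$ is the undirected graph on $\mathcal{S}_n$ with edge set $\{(\sigma,\sigma'):\mathbb{P}(\exists t\in(0,\infty):\mathcal{M}_{t-}=\sigma,\mathcal{M}_t=\sigma')>0\}$. For a graph $\mathcal{G}$ on $\mathcal{S}_n$, its generator is $\langle\mathcal{G}\rangle=\{\sigma^{-1}\cdot\sigma':(\sigma,\sigma')\in E(\mathcal{G})\}$. $\mathcal{T}$ is the set of all transpositions $(i\,j)$, $i\ne j$, and $\mathcal{T}^a=\{(i\,i{+}1):i\in[n-1]\}$ the adjacent transpositions. The expanded hypercube $\mathcal{H}_n$ is the graph on $\mathcal{S}_n$ with edges $\{(\sigma,\sigma'):\sum_{j=1}^n|\mathrm{Inv}_j(\sigma)-\mathrm{Inv}_j(\sigma')|=1\}$. *)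

theory Defs
  imports "HOL-Probability.Probability" "HOL-Combinatorics.Combinatorics"
begin

type_synonym perm_n = "nat \<Rightarrow> nat"

definition Sn :: "nat \<Rightarrow> perm_n set" where
  "Sn n = {\<sigma>. \<sigma> permutes {1..n}}"

definition Inv :: "nat \<Rightarrow> perm_n \<Rightarrow> nat" where
  "Inv n \<sigma> = card {(i, j). 1 \<le> i \<and> i < j \<and> j \<le> n \<and> \<sigma> i > \<sigma> j}"

definition Inv_j :: "perm_n \<Rightarrow> nat \<Rightarrow> nat" where
  "Inv_j \<sigma> j = card {i \<in> {1..<j}. \<sigma> i > \<sigma> j}"

text \<open>Mallows distribution; note 0 ^ 0 = 1 in Isabelle.\<close>
definition mallows :: "nat \<Rightarrow> real \<Rightarrow> perm_n \<Rightarrow> real" where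
  "mallows n q \<sigma> = q ^ Inv n \<sigma> / (\<Prod>k=1..n. \<Sum>l<k. q ^ l)"

definition left_lim :: "(real \<Rightarrow> 'b) \<Rightarrow> real \<Rightarrow> 'b \<Rightarrow> bool" where
  "left_lim f t s \<longleftrightarrow> (\<exists>\<delta>>0. \<forall>u. t - \<delta> < u \<and> u < t \<longrightarrow> f u = s)"

definition cadlag :: "(real \<Rightarrow> 'b) \<Rightarrow> bool" where
  "cadlag f \<longleftrightarrow>
     (\<forall>t\<ge>0. \<exists>\<delta>>0. \<forall>u. t \<le> u \<and> u < t + \<delta> \<longrightarrow> f u = f t) \<and>
     (\<forall>t>0. \<exists>s. left_lim f t s)"

definition mallows_process ::
  "'a measure \<Rightarrow> nat \<Rightarrow> (real \<Rightarrow> 'a \<Rightarrow> perm_n) \<Rightarrow> bool" where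
  "mallows_process P n M \<longleftrightarrow>
     prob_space P \<and>
     (\<forall>\<omega>\<in>space P. cadlag (\<lambda>t. M t \<omega>)) \<and>
     (\<forall>t\<ge>0. \<forall>\<omega>\<in>space P. M t \<omega> \<in> Sn n) \<and>
     (\<forall>t\<ge>0. \<forall>\<sigma>\<in>Sn n. {\<omega>\<in>space P. M t \<omega> = \<sigma>} \<in> sets P \<and>
        measure P {\<omega>\<in>space P. M t \<omega> = \<sigma>} = mallows n t \<sigma>)"

definition strongly_monotone ::
  "'a measure \<Rightarrow> nat \<Rightarrow> (real \<Rightarrow> 'a \<Rightarrow> perm_n) \<Rightarrow> bool" where
  "strongly_monotone P n M \<longleftrightarrow> mallows_process P n M \<and>
     (\<forall>\<omega>\<in>space P. \<forall>j\<in>{1..n}. \<forall>s t. 0 \<le> s \<and> s \<le> t \<longrightarrow>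
        Inv_j (M s \<omega>) j \<le> Inv_j (M t \<omega>) j)"

definition smooth ::
  "'a measure \<Rightarrow> nat \<Rightarrow> (real \<Rightarrow> 'a \<Rightarrow> perm_n) \<Rightarrow> bool" where
  "smooth P n M \<longleftrightarrow> strongly_monotone P n M \<and>
     (\<forall>\<omega>\<in>space P. \<forall>t>0. \<forall>\<sigma>. left_lim (\<lambda>u. M u \<omega>) t \<sigma> \<longrightarrow>
        Inv n (M t \<omega>) \<le> Inv n \<sigma> + 1)"

definition regular ::
  "'a measure \<Rightarrow> nat \<Rightarrow> (real \<Rightarrow> 'a \<Rightarrow> perm_n) \<Rightarrow> bool" where
  "regular P n M \<longleftrightarrow> smooth P n M \<and>
     prob_space.indep_vars P (\<lambda>j. PiM {0..} (\<lambda>t. count_space UNIV))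
       (\<lambda>j \<omega>. restrict (\<lambda>t. Inv_j (M t \<omega>) j) {0..}) {1..n}"

text \<open>A pair is an
  edge iff a jump (in either direction) between the two distinct permutations
  occurs with positive (outer) probability, i.e. the event is not P-null.\<close>
definition jump_event :: "'a measure \<Rightarrow> (real \<Rightarrow> 'a \<Rightarrow> perm_n) \<Rightarrow> perm_n \<Rightarrow> perm_n \<Rightarrow> bool" where
  "jump_event P M \<sigma> \<sigma>' \<longleftrightarrow>
     \<not> (AE \<omega> in P. \<not> (\<exists>t>0. left_lim (\<lambda>u. M u \<omega>) t \<sigma> \<and> M t \<omega> = \<sigma>'))"

definition trans_graph :: "'a measure \<Rightarrow> (real \<Rightarrow> 'a \<Rightarrow> perm_n) \<Rightarrow> (perm_n \<times> perm_n) set" where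
  "trans_graph P M = {(\<sigma>, \<sigma>'). \<sigma> \<noteq> \<sigma>' \<and> (jump_event P M \<sigma> \<sigma>' \<or> jump_event P M \<sigma>' \<sigma>)}"

definition hypercube :: "nat \<Rightarrow> (perm_n \<times> perm_n) set" where
  "hypercube n = {(\<sigma>, \<sigma>'). \<sigma> \<in> Sn n \<and> \<sigma>' \<in> Sn n \<and>
      (\<Sum>j=1..n. \<bar>int (Inv_j \<sigma> j) - int (Inv_j \<sigma>' j)\<bar>) = 1}"

definition generator :: "(perm_n \<times> perm_n) set \<Rightarrow> perm_n set" where
  "generator E = {inv \<sigma> \<circ> \<sigma>' | \<sigma> \<sigma>'. (\<sigma>, \<sigma>') \<in> E}"

definition transpositions :: "nat \<Rightarrow> perm_n set" where
  "transpositions n = {Transposition.transpose i j | i j. i \<in> {1..n} \<and> j \<in> {1..n} \<and> i \<noteq> j}"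

definition adj_transpositions :: "nat \<Rightarrow> perm_n set" where
  "adj_transpositions n = {Transposition.transpose i (i + 1) | i. 1 \<le> i \<and> i + 1 \<le> n}"

end

theory Submission
  imports Defs
begin

text \<open>A permutation \<open>\<sigma>\<close> of \<open>{1..n}\<close> is determined by its inversion code
  \<open>(Inv_j \<sigma> j)\<^sub>j\<close>, and \<open>Inv\<close> is the sum of the code.  Along a smooth process the code is
  nondecreasing and \<open>Inv\<close> increases by at most one per jump, so a jump raises exactly one code
  entry \<open>j\<close> by one: an edge of the expanded hypercube.  Such a move is right multiplication by the
  transposition \<open>(q j)\<close>, where \<open>\<sigma> q\<close> is the largest value below \<open>\<sigma> j\<close> left of \<open>j\<close>; and every
  transposition arises this way, so the hypercube generates exactly the transpositions.

  Almost surely \<open>M\<^sub>0 = id\<close>, while \<open>M\<^sub>1 = (i i+1)\<close> with positive probability; a path from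
  \<open>id\<close> to \<open>(i i+1)\<close> must jump by \<open>(i i+1)\<close>, so adjacent transpositions are in the generator.

  For a regular process and a hypercube edge raising entry \<open>j\<close> of \<open>\<sigma>\<close> from \<open>c\<close> to \<open>c + 1\<close>,
  continuity of the Mallows marginals in \<open>t\<close> yields times \<open>a < b\<close> at which, each with positive
  probability, entry \<open>j\<close> crosses level \<open>c\<close> and every other entry stays at its value in \<open>\<sigma>\<close>.
  By independence of the entries all of this happens simultaneously with positive probability,
  and then the crossing is precisely the jump \<open>\<sigma> \<rightarrow> \<sigma>'\<close>.\<close>

section \<open>Inversion codes\<close>

lemma Inv_j_le: "Inv_j \<sigma> j \<le> j - 1"
proof -
  have "Inv_j \<sigma> j \<le> card {1..<j}" unfolding Inv_j_def by (intro card_mono) auto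
  then show ?thesis by simp
qed

lemma Inv_j_id [simp]: "Inv_j id j = 0"
  unfolding Inv_j_def by simp

lemma Inv_eq_sum_Inv_j: "Inv n \<sigma> = (\<Sum>j=1..n. Inv_j \<sigma> j)"
proof -
  have "{(i, j). 1 \<le> i \<and> i < j \<and> j \<le> n \<and> \<sigma> i > \<sigma> j} =
        (\<lambda>(j, i). (i, j)) ` (SIGMA j:{1..n}. {i \<in> {1..<j}. \<sigma> i > \<sigma> j})"
    by (auto simp: image_iff)
  moreover have "inj_on (\<lambda>(j, i). (i, j)) (SIGMA j:{1..n}. {i \<in> {1..<j}. \<sigma> i > \<sigma> j})"
    by (auto simp: inj_on_def)
  ultimately show ?thesis
    unfolding Inv_def Inv_j_def by (simp add: card_image card_SigmaI)
qed

lemma greater_iff_card_less_Inv_j: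
  assumes "1 \<le> a" "a < b"
  shows "\<sigma> b < \<sigma> a \<longleftrightarrow> card {k\<in>{1..<b}. \<sigma> a < \<sigma> k} < Inv_j \<sigma> b"
proof
  assume "\<sigma> b < \<sigma> a"
  then have "{k\<in>{1..<b}. \<sigma> a < \<sigma> k} \<subset> {k\<in>{1..<b}. \<sigma> b < \<sigma> k}"
    using assms by auto
  then show "card {k\<in>{1..<b}. \<sigma> a < \<sigma> k} < Inv_j \<sigma> b"
    unfolding Inv_j_def by (intro psubset_card_mono) auto
next
  assume less: "card {k\<in>{1..<b}. \<sigma> a < \<sigma> k} < Inv_j \<sigma> b"
  show "\<sigma> b < \<sigma> a"
  proof (rule ccontr)
    assume "\<not> \<sigma> b < \<sigma> a"
    then have "{k\<in>{1..<b}. \<sigma> b < \<sigma> k} \<subseteq> {k\<in>{1..<b}. \<sigma> a < \<sigma> k}" by auto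
    then have "Inv_j \<sigma> b \<le> card {k\<in>{1..<b}. \<sigma> a < \<sigma> k}"
      unfolding Inv_j_def by (intro card_mono) auto
    with less show False by simp
  qed
qed

lemma permutes_eq_card_less:
  assumes \<sigma>: "\<sigma> permutes {1..n}" and a: "a \<in> {1..n}"
  shows "\<sigma> a = card {k\<in>{1..n}. \<sigma> k < \<sigma> a} + 1"
proof -
  have \<sigma>a: "\<sigma> a \<in> {1..n}" using permutes_in_image[OF \<sigma>] a by simp
  have "\<sigma> ` {k\<in>{1..n}. \<sigma> k < \<sigma> a} = {v\<in>\<sigma> ` {1..n}. v < \<sigma> a}" by auto
  also have "\<dots> = {1..<\<sigma> a}"
    using permutes_image[OF \<sigma>] \<sigma>a by auto
  finally have "card {k\<in>{1..n}. \<sigma> k < \<sigma> a} = \<sigma> a - 1"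
    using inj_on_subset[OF permutes_inj[OF \<sigma>]] by (metis card_atLeastLessThan card_image subset_UNIV)
  with \<sigma>a show ?thesis by simp
qed

lemma same_order_if_Inv_j_eq:
  assumes "inj \<sigma>" "inj \<sigma>'" and code: "\<And>j. j \<in> {1..n} \<Longrightarrow> Inv_j \<sigma> j = Inv_j \<sigma>' j"
    and "1 \<le> a" "a < b" "b \<le> n"
  shows "\<sigma> b < \<sigma> a \<longleftrightarrow> \<sigma>' b < \<sigma>' a"
  using assms(4-)
proof (induction b arbitrary: a rule: less_induct)
  case (less b)
  have "{k\<in>{1..<b}. \<sigma> a < \<sigma> k} = {k\<in>{1..<b}. \<sigma>' a < \<sigma>' k}"
  proof (intro Collect_cong conj_cong refl)
    fix k assume k: "k \<in> {1..<b}"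
    consider "k < a" | "k = a" | "a < k" by linarith
    then show "\<sigma> a < \<sigma> k \<longleftrightarrow> \<sigma>' a < \<sigma>' k"
    proof cases
      case 1 then show ?thesis using less.IH[of a k] less.prems k by auto
    next
      case 3
      then have "\<sigma> a \<noteq> \<sigma> k" "\<sigma>' a \<noteq> \<sigma>' k" using assms(1,2) by (auto dest: injD)
      then show ?thesis using less.IH[of k a] less.prems k 3 by auto
    qed simp
  qed
  then show ?case
    using greater_iff_card_less_Inv_j[of a b \<sigma>] greater_iff_card_less_Inv_j[of a b \<sigma>'] code[of b] less.prems
    by simp
qed

lemma permutes_eq_if_Inv_j_eq:
  assumes \<sigma>: "\<sigma> permutes {1..n}" and \<sigma>': "\<sigma>' permutes {1..n}"
    and code: "\<And>j. j \<in> {1..n} \<Longrightarrow> Inv_j \<sigma> j = Inv_j \<sigma>' j"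
  shows "\<sigma> = \<sigma>'"
proof
  fix a
  show "\<sigma> a = \<sigma>' a"
  proof (cases "a \<in> {1..n}")
    case True
    have inj: "inj \<sigma>" "inj \<sigma>'" using \<sigma> \<sigma>' by (auto dest: permutes_inj)
    have "\<sigma> k < \<sigma> a \<longleftrightarrow> \<sigma>' k < \<sigma>' a" if "k \<in> {1..n}" for k
    proof -
      consider "k < a" | "k = a" | "a < k" by linarith
      then show ?thesis
      proof cases
        case 1
        have "1 \<le> k" "a \<le> n" using that True by auto
        note same_order_if_Inv_j_eq[OF inj code \<open>1 \<le> k\<close> 1 \<open>a \<le> n\<close>]
        moreover have "\<sigma> a \<noteq> \<sigma> k" "\<sigma>' a \<noteq> \<sigma>' k" using 1 inj by (auto dest: injD)
        ultimately show ?thesis by auto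
      next
        case 3
        have "1 \<le> a" "k \<le> n" using that True by auto
        then show ?thesis using same_order_if_Inv_j_eq[OF inj code _ 3] by blast
      qed simp
    qed
    then have "{k\<in>{1..n}. \<sigma> k < \<sigma> a} = {k\<in>{1..n}. \<sigma>' k < \<sigma>' a}" by auto
    then show ?thesis using permutes_eq_card_less[OF \<sigma> True] permutes_eq_card_less[OF \<sigma>' True] by simp
  next
    case False
    then show ?thesis using \<sigma> \<sigma>' by (simp add: permutes_not_in)
  qed
qed

lemma Inv_j_comp_transpose:
  assumes inj: "inj \<sigma>" and p: "1 \<le> p" "p < j" and less: "\<sigma> p < \<sigma> j"
    and no_between: "\<And>k. 1 \<le> k \<Longrightarrow> k < j \<Longrightarrow> k \<noteq> p \<Longrightarrow> \<not> (\<sigma> p < \<sigma> k \<and> \<sigma> k < \<sigma> j)"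
  shows "Inv_j (\<sigma> \<circ> Transposition.transpose p j) m = (if m = j then Inv_j \<sigma> m + 1 else Inv_j \<sigma> m)"
proof -
  define t where "t = Transposition.transpose p j"
  have same_side: "(\<sigma> j < \<sigma> k \<longleftrightarrow> \<sigma> p < \<sigma> k) \<and> (\<sigma> k < \<sigma> j \<longleftrightarrow> \<sigma> k < \<sigma> p)"
    if "1 \<le> k" "k < j" "k \<noteq> p" for k
  proof -
    have "\<sigma> k \<noteq> \<sigma> p" "\<sigma> k \<noteq> \<sigma> j" using that injD[OF inj] by auto
    then show ?thesis using no_between[OF that] less by auto
  qed
  consider "m < j" | "m = j" | "j < m" by linarith
  then show ?thesis
  proof cases
    case 1
    have "{k\<in>{1..<m}. \<sigma> (t m) < \<sigma> (t k)} = {k\<in>{1..<m}. \<sigma> m < \<sigma> k}"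
    proof (intro Collect_cong conj_cong refl)
      fix k assume k: "k \<in> {1..<m}"
      consider "m = p" | "k = p" | "k \<noteq> p" "m \<noteq> p" by blast
      then show "\<sigma> (t m) < \<sigma> (t k) \<longleftrightarrow> \<sigma> m < \<sigma> k"
      proof cases
        case 1
        then have "t m = j" "t k = k" using k p by (auto simp: t_def)
        then show ?thesis using same_side[of k] 1 k p by auto
      next
        case 2
        then have "t m = m" "t k = j" using k \<open>m < j\<close> by (auto simp: t_def)
        then show ?thesis using same_side[of m] 2 k \<open>m < j\<close> by auto
      next
        case 3
        then have "t m = m" "t k = k" using k \<open>m < j\<close> by (auto simp: t_def)
        then show ?thesis by simp
      qed
    qed
    then show ?thesis using 1 unfolding Inv_j_def t_def by simp
  next
    case 2
    have "\<sigma> (t j) < \<sigma> (t k) \<longleftrightarrow> k = p \<or> \<sigma> j < \<sigma> k" if "k \<in> {1..<j}" for k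
    proof (cases "k = p")
      case True
      then show ?thesis using less by (simp add: t_def)
    next
      case False
      then have "t j = p" "t k = k" using that by (auto simp: t_def)
      then show ?thesis using same_side[of k] that False by auto
    qed
    then have "{k\<in>{1..<j}. \<sigma> (t j) < \<sigma> (t k)} = insert p {k\<in>{1..<j}. \<sigma> j < \<sigma> k}"
      using p by auto
    moreover have "p \<notin> {k\<in>{1..<j}. \<sigma> j < \<sigma> k}" using less by auto
    ultimately show ?thesis using 2 unfolding Inv_j_def t_def by simp
  next
    case 3
    have "t m = m" using 3 p by (simp add: t_def)
    moreover have "t k \<in> {1..<m} \<longleftrightarrow> k \<in> {1..<m}" for k
      using 3 p by (cases "k = p"; cases "k = j") (auto simp: t_def)
    moreover have "t (t k) = k" for k by (simp add: t_def)
    ultimately have "{k\<in>{1..<m}. \<sigma> (t m) < \<sigma> (t k)} = t ` {k\<in>{1..<m}. \<sigma> m < \<sigma> k}"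
      using in_transpose_image_iff[of _ p j, folded t_def] by auto
    then show ?thesis using 3 unfolding Inv_j_def t_def by (simp add: card_image)
  qed
qed

definition code_step :: "nat \<Rightarrow> perm_n \<Rightarrow> perm_n \<Rightarrow> nat \<Rightarrow> bool" where
  "code_step n \<sigma> \<sigma>' j \<longleftrightarrow>
     (\<forall>m\<in>{1..n}. Inv_j \<sigma>' m = (if m = j then Inv_j \<sigma> m + 1 else Inv_j \<sigma> m))"

lemma code_step_eq_comp_transpose:
  assumes \<sigma>: "\<sigma> permutes {1..n}" and \<sigma>': "\<sigma>' permutes {1..n}" and j: "j \<in> {1..n}"
    and step: "code_step n \<sigma> \<sigma>' j"
  shows "\<exists>q. 1 \<le> q \<and> q < j \<and> \<sigma>' = \<sigma> \<circ> Transposition.transpose q j"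
proof -
  define L where "L = {k\<in>{1..<j}. \<sigma> k < \<sigma> j}"
  have inj: "inj \<sigma>" using \<sigma> by (rule permutes_inj)
  have less_if: "\<sigma> k < \<sigma> j" if "k < j" "\<not> \<sigma> j < \<sigma> k" for k
    using that inj_eq[OF inj, of k j] by auto
  have partition: "{1..<j} = L \<union> {k\<in>{1..<j}. \<sigma> j < \<sigma> k}"
    by (auto simp: L_def intro: less_if)
  have "card {1..<j} = card L + card {k\<in>{1..<j}. \<sigma> j < \<sigma> k}"
    by (subst partition, rule card_Un_disjoint) (auto simp: L_def)
  then have "j - 1 = card L + Inv_j \<sigma> j" by (simp add: Inv_j_def)
  moreover have "Inv_j \<sigma>' j = Inv_j \<sigma> j + 1" using step j by (simp add: code_step_def)
  ultimately have "card L \<noteq> 0" using Inv_j_le[of \<sigma>' j] by linarith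
  then obtain k0 where k0: "k0 \<in> L" by (metis card.empty ex_in_conv)
  have bound: "\<forall>k. k \<in> L \<longrightarrow> \<sigma> k < \<sigma> j" by (simp add: L_def)
  from ex_has_greatest_nat[of "\<lambda>k. k \<in> L", OF k0 bound]
  obtain q where q: "q \<in> L" and q_max: "\<forall>k. k \<in> L \<longrightarrow> \<sigma> k \<le> \<sigma> q" by blast
  then have q': "1 \<le> q" "q < j" "\<sigma> q < \<sigma> j" by (auto simp: L_def)
  have no_between: "\<not> (\<sigma> q < \<sigma> k \<and> \<sigma> k < \<sigma> j)" if "1 \<le> k" "k < j" "k \<noteq> q" for k
    using q_max that by (auto simp: L_def)
  have "\<sigma> \<circ> Transposition.transpose q j permutes {1..n}"
    using q' j by (intro permutes_compose[OF permutes_swap_id \<sigma>]) auto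
  moreover have "Inv_j (\<sigma> \<circ> Transposition.transpose q j) m =
      (if m = j then Inv_j \<sigma> m + 1 else Inv_j \<sigma> m)" for m
    by (rule Inv_j_comp_transpose[OF inj q']) (rule no_between)
  ultimately have "\<sigma>' = \<sigma> \<circ> Transposition.transpose q j"
    using step by (intro permutes_eq_if_Inv_j_eq[OF \<sigma>']) (simp_all add: code_step_def)
  with q' show ?thesis by blast
qed

lemma hypercube_iff_code_step:
  assumes "\<sigma> \<in> Sn n" "\<sigma>' \<in> Sn n"
  shows "(\<sigma>, \<sigma>') \<in> hypercube n \<longleftrightarrow> (\<exists>j\<in>{1..n}. code_step n \<sigma> \<sigma>' j \<or> code_step n \<sigma>' \<sigma> j)"
proof -
  define d where "d m = nat \<bar>int (Inv_j \<sigma> m) - int (Inv_j \<sigma>' m)\<bar>" for m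
  have "(\<Sum>m=1..n. \<bar>int (Inv_j \<sigma> m) - int (Inv_j \<sigma>' m)\<bar>) = int (\<Sum>m=1..n. d m)"
    by (simp add: d_def)
  with assms have "(\<sigma>, \<sigma>') \<in> hypercube n \<longleftrightarrow> (\<Sum>m=1..n. d m) = 1"
    by (simp add: hypercube_def del: of_nat_sum)
  also have "\<dots> \<longleftrightarrow> (\<exists>j\<in>{1..n}. d j = 1 \<and> (\<forall>m\<in>{1..n}. j \<noteq> m \<longrightarrow> d m = 0))"
    using sum_eq_1_iff[of "{1..n}" d] by simp
  also have "\<dots> \<longleftrightarrow> (\<exists>j\<in>{1..n}. code_step n \<sigma> \<sigma>' j \<or> code_step n \<sigma>' \<sigma> j)"
    by (intro bex_cong refl) (auto simp: d_def code_step_def)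
  finally show ?thesis .
qed

lemma generator_hypercube: "generator (hypercube n) = transpositions n"
proof
  show "generator (hypercube n) \<subseteq> transpositions n"
  proof
    fix \<tau> assume "\<tau> \<in> generator (hypercube n)"
    then obtain \<sigma> \<sigma>' where edge: "(\<sigma>, \<sigma>') \<in> hypercube n" and \<tau>: "\<tau> = inv \<sigma> \<circ> \<sigma>'"
      by (auto simp: generator_def)
    then have S: "\<sigma> \<in> Sn n" "\<sigma>' \<in> Sn n" by (auto simp: hypercube_def)
    then have perm: "\<sigma> permutes {1..n}" "\<sigma>' permutes {1..n}" by (auto simp: Sn_def)
    obtain j where j: "j \<in> {1..n}" and "code_step n \<sigma> \<sigma>' j \<or> code_step n \<sigma>' \<sigma> j"
      using edge hypercube_iff_code_step[OF S] by auto
    then obtain q where q: "1 \<le> q" "q < j"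
      and "\<sigma>' = \<sigma> \<circ> Transposition.transpose q j \<or> \<sigma> = \<sigma>' \<circ> Transposition.transpose q j"
      using code_step_eq_comp_transpose[OF perm j] code_step_eq_comp_transpose[OF perm(2,1) j] by blast
    then have "\<sigma>' = \<sigma> \<circ> Transposition.transpose q j" by (auto simp: comp_assoc)
    then have "\<tau> = Transposition.transpose q j"
      using \<tau> permutes_inv_o(2)[OF perm(1)] by (simp add: o_assoc)
    with q j show "\<tau> \<in> transpositions n" by (force simp: transpositions_def)
  qed
  show "transpositions n \<subseteq> generator (hypercube n)"
  proof
    fix \<tau> assume "\<tau> \<in> transpositions n"
    then obtain i j where \<tau>: "\<tau> = Transposition.transpose i j" and "i \<in> {1..n}" "j \<in> {1..n}" "i \<noteq> j"
      by (auto simp: transpositions_def)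
    moreover define a b where "a = min i j" and "b = max i j"
    ultimately have \<tau>: "\<tau> = Transposition.transpose a b" and ab: "1 \<le> a" "a < b" "b \<le> n"
      by (auto simp: min_def max_def transpose_commute)
    \<comment> \<open>\<open>\<sigma> b = a + 1\<close> is the successor of \<open>\<sigma> a = a\<close>, so no value lies strictly between them\<close>
    define \<sigma> where "\<sigma> = Transposition.transpose (a + 1) b"
    have \<sigma>: "\<sigma> permutes {1..n}" unfolding \<sigma>_def using ab by (intro permutes_swap_id) auto
    have \<sigma>\<tau>: "\<sigma> \<circ> \<tau> permutes {1..n}" unfolding \<tau> using ab by (intro permutes_compose[OF permutes_swap_id \<sigma>]) auto
    have "\<sigma> a < \<sigma> b" using ab by (simp add: \<sigma>_def)
    moreover have "\<not> (\<sigma> a < \<sigma> k \<and> \<sigma> k < \<sigma> b)" if "k \<noteq> a" "k < b" for k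
      using ab that by (auto simp: \<sigma>_def transpose_def)
    ultimately have "code_step n \<sigma> (\<sigma> \<circ> \<tau>) b"
      using Inv_j_comp_transpose[OF inj_transpose ab(1,2)] by (simp add: code_step_def \<tau> \<sigma>_def)
    then have "(\<sigma>, \<sigma> \<circ> \<tau>) \<in> hypercube n"
      using hypercube_iff_code_step[of \<sigma> n "\<sigma> \<circ> \<tau>"] \<sigma> \<sigma>\<tau> ab by (auto simp: Sn_def)
    moreover have "\<tau> = inv \<sigma> \<circ> (\<sigma> \<circ> \<tau>)" using permutes_inv_o(2)[OF \<sigma>] by (simp add: o_assoc)
    ultimately show "\<tau> \<in> generator (hypercube n)" unfolding generator_def by blast
  qed
qed

lemma code_step_if_mono:
  assumes mono: "\<And>m. m \<in> {1..n} \<Longrightarrow> Inv_j \<sigma> m \<le> Inv_j \<sigma>' m" and Inv: "Inv n \<sigma>' \<le> Inv n \<sigma> + 1"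
    and j: "j \<in> {1..n}" "Inv_j \<sigma> j < Inv_j \<sigma>' j"
  shows "code_step n \<sigma> \<sigma>' j"
proof -
  define d where "d m = Inv_j \<sigma>' m - Inv_j \<sigma> m" for m
  have "Inv n \<sigma>' = (\<Sum>m=1..n. Inv_j \<sigma> m + d m)"
    unfolding Inv_eq_sum_Inv_j using mono by (intro sum.cong) (auto simp: d_def)
  also have "\<dots> = Inv n \<sigma> + (\<Sum>m=1..n. d m)" by (simp add: Inv_eq_sum_Inv_j sum.distrib)
  finally have "(\<Sum>m=1..n. d m) \<le> 1" using Inv by simp
  moreover have "(\<Sum>m=1..n. d m) = d j + (\<Sum>m\<in>{1..n}-{j}. d m)"
    using j(1) by (simp add: sum.remove)
  moreover have "1 \<le> d j" using j by (simp add: d_def)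
  ultimately have "d j = 1" "(\<Sum>m\<in>{1..n}-{j}. d m) = 0" by linarith+
  then have "d j = 1" "\<forall>m\<in>{1..n}-{j}. d m = 0" by simp_all
  then show ?thesis using mono by (force simp: code_step_def d_def)
qed

lemma code_step_adjacent:
  assumes \<sigma>: "\<sigma> permutes {1..n}" and \<sigma>': "\<sigma>' permutes {1..n}" and i: "1 \<le> i" "i + 1 \<le> n"
    and step: "code_step n \<sigma> \<sigma>' (i + 1)" and "Inv_j \<sigma> i = 0" "Inv_j \<sigma> (i + 1) = 0"
  shows "\<sigma>' = \<sigma> \<circ> Transposition.transpose i (i + 1)"
proof -
  have inj: "inj \<sigma>" using \<sigma> by (rule permutes_inj)
  have none_above_i: "{k\<in>{1..<i}. \<sigma> i < \<sigma> k} = {}"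
    and none_above_i1: "{k\<in>{1..<i+1}. \<sigma> (i + 1) < \<sigma> k} = {}"
    using assms(6,7) by (auto simp: Inv_j_def)
  have "\<sigma> i \<noteq> \<sigma> (i + 1)" using injD[OF inj, of i "i + 1"] by auto
  then have adjacent: "1 \<le> i" "i < i + 1" "\<sigma> i < \<sigma> (i + 1)" using none_above_i1 i by auto
  have no_between: "\<not> (\<sigma> i < \<sigma> k \<and> \<sigma> k < \<sigma> (i + 1))" if "1 \<le> k" "k < i + 1" "k \<noteq> i" for k
    using none_above_i that by auto
  have code: "Inv_j (\<sigma> \<circ> Transposition.transpose i (i + 1)) m =
      (if m = i + 1 then Inv_j \<sigma> m + 1 else Inv_j \<sigma> m)" for m
    by (rule Inv_j_comp_transpose[OF inj adjacent]) (rule no_between)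
  have "\<sigma> \<circ> Transposition.transpose i (i + 1) permutes {1..n}"
    using i by (intro permutes_compose[OF permutes_swap_id \<sigma>]) auto
  then show ?thesis
    using step by (intro permutes_eq_if_Inv_j_eq[OF \<sigma>']) (simp_all add: code_step_def code[simplified])
qed

lemma Inv_j_adjacent_transpose:
  assumes "1 \<le> i"
  shows "Inv_j (Transposition.transpose i (i + 1)) m = (if m = i + 1 then 1 else 0)"
  using Inv_j_comp_transpose[OF inj_on_id[of UNIV] assms, of "i + 1" m] by simp

lemma code_step_unique:
  assumes "\<sigma>1 permutes {1..n}" "\<sigma>2 permutes {1..n}" "code_step n \<sigma> \<sigma>1 j" "code_step n \<sigma> \<sigma>2 j"
  shows "\<sigma>1 = \<sigma>2"
  using assms by (intro permutes_eq_if_Inv_j_eq) (auto simp: code_step_def)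

lemma comp_mem_generator:
  assumes "(\<sigma>, \<sigma> \<circ> \<tau>) \<in> E" "bij \<sigma>"
  shows "\<tau> \<in> generator E"
proof -
  have "\<tau> = inv \<sigma> \<circ> (\<sigma> \<circ> \<tau>)" using assms(2) by (simp add: o_assoc bij_is_inj)
  with assms(1) show ?thesis unfolding generator_def by blast
qed

lemma finite_Sn: "finite (Sn n)"
  unfolding Sn_def by (rule finite_permutations) simp

lemma id_in_Sn: "id \<in> Sn n"
  by (simp add: Sn_def)

section \<open>Cadlag paths\<close>

lemma left_lim_imp_ex_before:
  assumes "left_lim f t s" "0 < t"
  shows "\<exists>u. 0 < u \<and> u < t \<and> f u = s"
proof -
  obtain \<delta> where \<delta>: "0 < \<delta>" "\<And>u. t - \<delta> < u \<Longrightarrow> u < t \<Longrightarrow> f u = s"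
    using assms(1) unfolding left_lim_def by blast
  show ?thesis
    using assms(2) \<delta> by (intro exI[of _ "max (t - \<delta> / 2) (t / 2)"]) auto
qed

text \<open>Take \<open>s = Sup {u \<in> [a, b]. g (f u) \<le> c}\<close>: right-continuity at \<open>s\<close> forces
  \<open>g (f s) > c\<close>, and just before \<open>s\<close> there are times with \<open>g \<circ> f \<le> c\<close> at which \<open>f\<close> already
  equals its left limit at \<open>s\<close>.\<close>
lemma cadlag_upcrossing:
  fixes f :: "real \<Rightarrow> 'b" and g :: "'b \<Rightarrow> nat"
  assumes cadlag: "cadlag f" and "0 \<le> a" "a < b" and ga: "g (f a) \<le> c" and gb: "c < g (f b)"
  shows "\<exists>u s. a \<le> u \<and> u < s \<and> s \<le> b \<and> left_lim f s (f u) \<and> g (f u) \<le> c \<and> c < g (f s)"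
proof -
  define S where "S = {u\<in>{a..b}. g (f u) \<le> c}"
  define s where "s = Sup S"
  have aS: "a \<in> S" using assms by (auto simp: S_def)
  have bdd: "bdd_above S" unfolding bdd_above_def S_def by auto
  have le_s: "u \<le> s" if "u \<in> S" for u using cSup_upper[OF that bdd] by (simp add: s_def)
  have "a \<le> s" using le_s[OF aS] .
  have "s \<le> b" unfolding s_def using aS by (intro cSup_least) (auto simp: S_def)
  have gs: "c < g (f s)"
  proof (rule ccontr)
    assume "\<not> c < g (f s)"
    then have gsc: "g (f s) \<le> c" by simp
    with gb \<open>s \<le> b\<close> have "s < b" by (cases "s = b") auto
    have "0 \<le> s" using \<open>0 \<le> a\<close> \<open>a \<le> s\<close> by linarith
    then obtain \<delta> where \<delta>: "0 < \<delta>" "\<And>u. s \<le> u \<Longrightarrow> u < s + \<delta> \<Longrightarrow> f u = f s"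
      using cadlag unfolding cadlag_def by blast
    define u where "u = min (s + \<delta> / 2) b"
    have "s < u" "u < s + \<delta>" "u \<le> b" using \<delta>(1) \<open>s < b\<close> by (auto simp: u_def)
    moreover have "f u = f s" using \<open>s < u\<close> \<open>u < s + \<delta>\<close> by (intro \<delta>(2)) auto
    ultimately have "u \<in> S" using gsc \<open>a \<le> s\<close> by (simp add: S_def)
    with \<open>s < u\<close> le_s show False by force
  qed
  with ga have "a < s" using \<open>a \<le> s\<close> by (cases "a = s") auto
  then have "0 < s" using \<open>0 \<le> a\<close> by linarith
  then obtain \<sigma> where ll: "left_lim f s \<sigma>" using cadlag unfolding cadlag_def by blast
  then obtain \<delta> where \<delta>: "0 < \<delta>" "\<And>u. s - \<delta> < u \<Longrightarrow> u < s \<Longrightarrow> f u = \<sigma>"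
    unfolding left_lim_def by blast
  have "s - min \<delta> (s - a) < Sup S" using \<delta>(1) \<open>a < s\<close> by (simp add: s_def[symmetric])
  then obtain u where u: "u \<in> S" "s - min \<delta> (s - a) < u" using less_cSupD[of S] aS by blast
  moreover have "u \<noteq> s" using u(1) gs by (auto simp: S_def)
  ultimately have "u < s" using le_s by force
  moreover have "f u = \<sigma>" using u(2) \<open>u < s\<close> by (intro \<delta>(2)) auto
  ultimately show ?thesis
    using u \<open>s \<le> b\<close> ll gs by (intro exI[of _ u] exI[of _ s]) (auto simp: S_def)
qed

section \<open>Mallows marginals\<close>

lemma mallows_denominator_pos: "0 \<le> (t::real) \<Longrightarrow> 0 < (\<Prod>k=1..n. \<Sum>l<k. t ^ l)"
proof (intro prod_pos)
  fix k assume "0 \<le> t" "k \<in> {1..n}"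
  then have "t ^ 0 \<le> (\<Sum>l<k. t ^ l)" by (intro member_le_sum) auto
  then show "0 < (\<Sum>l<k. t ^ l)" by simp
qed

lemma mallows_pos: "0 < t \<Longrightarrow> 0 < mallows n t \<sigma>"
  unfolding mallows_def using mallows_denominator_pos[of t n] by simp

lemma mallows_nonneg: "0 \<le> t \<Longrightarrow> 0 \<le> mallows n t \<sigma>"
  unfolding mallows_def using mallows_denominator_pos[of t n] by simp

lemma mallows_0_id: "mallows n 0 id = 1"
proof -
  have "(\<Sum>l<k. (0::real) ^ l) = 1" if "1 \<le> k" for k
    using that by (simp add: power_0_left sum.If_cases lessThan_def)
  then show ?thesis by (simp add: mallows_def Inv_eq_sum_Inv_j)
qed

lemma mallows_1: "mallows n 1 \<sigma> = 1 / fact n"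
  by (simp add: mallows_def fact_prod)

definition mallows_prob :: "nat \<Rightarrow> (perm_n \<Rightarrow> bool) \<Rightarrow> real \<Rightarrow> real" where
  "mallows_prob n Q t = (\<Sum>\<rho>\<in>{\<rho>\<in>Sn n. Q \<rho>}. mallows n t \<rho>)"

lemma mallows_prob_1_True: "mallows_prob n (\<lambda>_. True) 1 = 1"
proof -
  have "card (Sn n) = fact n" unfolding Sn_def by (rule card_permutations) simp_all
  then show ?thesis by (simp add: mallows_prob_def mallows_1)
qed

lemma mallows_prob_disj:
  assumes "\<And>\<rho>. Q \<rho> \<longleftrightarrow> Q1 \<rho> \<or> Q2 \<rho>" "\<And>\<rho>. \<not> (Q1 \<rho> \<and> Q2 \<rho>)"
  shows "mallows_prob n Q t = mallows_prob n Q1 t + mallows_prob n Q2 t"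
proof -
  have "{\<rho>\<in>Sn n. Q \<rho>} = {\<rho>\<in>Sn n. Q1 \<rho>} \<union> {\<rho>\<in>Sn n. Q2 \<rho>}" using assms(1) by auto
  then show ?thesis
    unfolding mallows_prob_def using assms(2) finite_Sn by (simp add: sum.union_disjoint disjoint_iff)
qed

lemma mallows_le_mallows_prob:
  assumes "Q \<rho>" "\<rho> \<in> Sn n" "0 \<le> t"
  shows "mallows n t \<rho> \<le> mallows_prob n Q t"
  unfolding mallows_prob_def using assms finite_Sn mallows_nonneg by (intro member_le_sum) auto

lemma continuous_on_mallows_prob: "continuous_on {0..} (mallows_prob n Q)"
proof -
  have "(\<Prod>k=1..n. \<Sum>l<k. t ^ l) \<noteq> 0" if "t \<in> {0..}" for t :: real
    using mallows_denominator_pos[of t n] that by (simp del: prod_zero_iff)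
  then show ?thesis
    unfolding mallows_prob_def[abs_def] mallows_def by (intro continuous_intros) auto
qed

lemma mallows_prob_singleton:
  assumes "\<rho> \<in> Sn n" shows "mallows_prob n (\<lambda>\<sigma>. \<sigma> = \<rho>) t = mallows n t \<rho>"
proof -
  have "{\<sigma>\<in>Sn n. \<sigma> = \<rho>} = {\<rho>}" using assms by auto
  then show ?thesis by (simp add: mallows_prob_def)
qed

section \<open>Mallows processes\<close>

lemma mallows_process_event:
  assumes mp: "mallows_process P n M" and t: "0 \<le> t"
  shows "{\<omega>\<in>space P. Q (M t \<omega>)} \<in> sets P"
    and "measure P {\<omega>\<in>space P. Q (M t \<omega>)} = mallows_prob n Q t"
proof -
  interpret prob_space P using mp by (simp add: mallows_process_def)
  define E where "E \<rho> = {\<omega>\<in>space P. M t \<omega> = \<rho>}" for \<rho>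
  have E: "E \<rho> \<in> sets P" "measure P (E \<rho>) = mallows n t \<rho>" if "\<rho> \<in> Sn n" for \<rho>
    using mp t that unfolding mallows_process_def E_def by blast+
  have events: "{\<omega>\<in>space P. Q (M t \<omega>)} = (\<Union>\<rho>\<in>{\<rho>\<in>Sn n. Q \<rho>}. E \<rho>)"
    using mp t unfolding mallows_process_def E_def by blast
  have finite: "finite {\<rho>\<in>Sn n. Q \<rho>}" using finite_Sn by simp
  show "{\<omega>\<in>space P. Q (M t \<omega>)} \<in> sets P"
    unfolding events using finite E by (intro sets.finite_UN) auto
  have "measure P (\<Union>\<rho>\<in>{\<rho>\<in>Sn n. Q \<rho>}. E \<rho>) = (\<Sum>\<rho>\<in>{\<rho>\<in>Sn n. Q \<rho>}. measure P (E \<rho>))"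
    using finite E by (intro finite_measure_finite_Union) (auto simp: disjoint_family_on_def E_def)
  then show "measure P {\<omega>\<in>space P. Q (M t \<omega>)} = mallows_prob n Q t"
    unfolding events mallows_prob_def using E by simp
qed

lemma (in prob_space) prob_conj_not_pos:
  assumes "{x\<in>space M. A x} \<in> events" "{x\<in>space M. B x} \<in> events"
    and "prob {x\<in>space M. B x} < prob {x\<in>space M. A x}"
  shows "0 < prob {x\<in>space M. A x \<and> \<not> B x}"
proof -
  have "prob {x\<in>space M. A x} \<le> prob ({x\<in>space M. A x \<and> \<not> B x} \<union> {x\<in>space M. B x})"
    using assms(1,2) by (intro finite_measure_mono) auto
  also have "\<dots> \<le> prob {x\<in>space M. A x \<and> \<not> B x} + prob {x\<in>space M. B x}"
    using assms(1,2) by (intro measure_Un_le) auto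
  finally show ?thesis using assms(3) by linarith
qed

lemma mallows_process_prob_pos:
  assumes mp: "mallows_process P n M" and "0 \<le> s" "0 \<le> t"
    and less: "mallows_prob n R t < mallows_prob n Q s"
  shows "0 < measure P {\<omega>\<in>space P. Q (M s \<omega>) \<and> \<not> R (M t \<omega>)}"
proof -
  interpret prob_space P using mp by (simp add: mallows_process_def)
  show ?thesis
    using mallows_process_event[OF mp] assms(2,3) less by (intro prob_conj_not_pos) auto
qed

lemma pred_PiM_count_space_two_components:
  assumes "a \<in> I" "b \<in> I"
  shows "{f \<in> space (PiM I (\<lambda>_. count_space UNIV)). R (f a) (f b)} \<in> sets (PiM I (\<lambda>_. count_space (UNIV :: nat set)))"
proof -
  have "(\<lambda>f. (f a, f b)) \<in> measurable (PiM I (\<lambda>_. count_space UNIV)) (count_space (UNIV :: (nat \<times> nat) set))"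
    using assms by (simp add: pair_measure_countable[symmetric] measurable_Pair measurable_component_singleton)
  from measurable_sets[OF this, of "{p. R (fst p) (snd p)}"] show ?thesis
    by (simp add: vimage_def Int_def conj_commute)
qed

section \<open>Jumps of smooth processes\<close>

lemma smooth_imp_mallows_process: "smooth P n M \<Longrightarrow> mallows_process P n M"
  by (simp add: smooth_def strongly_monotone_def)

lemma smooth_in_Sn: "smooth P n M \<Longrightarrow> \<omega> \<in> space P \<Longrightarrow> 0 \<le> t \<Longrightarrow> M t \<omega> \<in> Sn n"
  by (simp add: smooth_def strongly_monotone_def mallows_process_def)

lemma smooth_cadlag: "smooth P n M \<Longrightarrow> \<omega> \<in> space P \<Longrightarrow> cadlag (\<lambda>t. M t \<omega>)"
  by (simp add: smooth_def strongly_monotone_def mallows_process_def)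

lemma smooth_Inv_j_mono:
  "smooth P n M \<Longrightarrow> \<omega> \<in> space P \<Longrightarrow> j \<in> {1..n} \<Longrightarrow> 0 \<le> s \<Longrightarrow> s \<le> t \<Longrightarrow>
    Inv_j (M s \<omega>) j \<le> Inv_j (M t \<omega>) j"
  by (simp add: smooth_def strongly_monotone_def)

lemma smooth_jump_code_step:
  assumes sm: "smooth P n M" and \<omega>: "\<omega> \<in> space P" and "0 \<le> u" "u < t"
    and jump: "left_lim (\<lambda>u. M u \<omega>) t (M u \<omega>)"
    and j: "j \<in> {1..n}" "Inv_j (M u \<omega>) j < Inv_j (M t \<omega>) j"
  shows "code_step n (M u \<omega>) (M t \<omega>) j"
proof (rule code_step_if_mono[OF _ _ j])
  show "Inv_j (M u \<omega>) m \<le> Inv_j (M t \<omega>) m" if "m \<in> {1..n}" for m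
    using smooth_Inv_j_mono[OF sm \<omega> that] assms(3,4) by simp
  show "Inv n (M t \<omega>) \<le> Inv n (M u \<omega>) + 1"
    using sm \<omega> jump assms(3,4) unfolding smooth_def by simp
qed

lemma smooth_upcrossing:
  assumes sm: "smooth P n M" and \<omega>: "\<omega> \<in> space P" and j: "j \<in> {1..n}"
    and "0 \<le> a" "a < b" "Inv_j (M a \<omega>) j \<le> c" "c < Inv_j (M b \<omega>) j"
  obtains u s where "a \<le> u" "u < s" "s \<le> b" "left_lim (\<lambda>t. M t \<omega>) s (M u \<omega>)"
    "Inv_j (M u \<omega>) j = c" "code_step n (M u \<omega>) (M s \<omega>) j"
proof -
  obtain u s where us: "a \<le> u" "u < s" "s \<le> b" "left_lim (\<lambda>t. M t \<omega>) s (M u \<omega>)"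
    and crossing: "Inv_j (M u \<omega>) j \<le> c" "c < Inv_j (M s \<omega>) j"
    using cadlag_upcrossing[OF smooth_cadlag[OF sm \<omega>], of a b "\<lambda>\<rho>. Inv_j \<rho> j" c] assms(4-) by blast
  have step: "code_step n (M u \<omega>) (M s \<omega>) j"
    using us crossing \<open>0 \<le> a\<close> by (intro smooth_jump_code_step[OF sm \<omega>] j) auto
  then have "Inv_j (M s \<omega>) j = Inv_j (M u \<omega>) j + 1" using j by (simp add: code_step_def)
  with crossing have "Inv_j (M u \<omega>) j = c" by simp
  with us step show ?thesis by (intro that)
qed

lemma jump_event_imp_ex:
  assumes "jump_event P M \<sigma> \<sigma>'"
  shows "\<exists>\<omega>\<in>space P. \<exists>t>0. left_lim (\<lambda>u. M u \<omega>) t \<sigma> \<and> M t \<omega> = \<sigma>'"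
  using assms AE_I2[of P "\<lambda>\<omega>. \<not> (\<exists>t>0. left_lim (\<lambda>u. M u \<omega>) t \<sigma> \<and> M t \<omega> = \<sigma>')"]
  unfolding jump_event_def by blast

lemma smooth_jump_event_hypercube:
  assumes sm: "smooth P n M" and jump: "jump_event P M \<sigma> \<sigma>'" and "\<sigma> \<noteq> \<sigma>'"
  shows "(\<sigma>, \<sigma>') \<in> hypercube n"
proof -
  obtain \<omega> t where \<omega>: "\<omega> \<in> space P" and "0 < t" "left_lim (\<lambda>u. M u \<omega>) t \<sigma>" "M t \<omega> = \<sigma>'"
    using jump_event_imp_ex[OF jump] by blast
  moreover obtain u where "0 < u" "u < t" "M u \<omega> = \<sigma>"
    using left_lim_imp_ex_before[OF \<open>left_lim _ t \<sigma>\<close> \<open>0 < t\<close>] by blast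
  ultimately have S: "\<sigma> \<in> Sn n" "\<sigma>' \<in> Sn n" and jump': "left_lim (\<lambda>u. M u \<omega>) t (M u \<omega>)"
    and mono: "\<And>m. m \<in> {1..n} \<Longrightarrow> Inv_j \<sigma> m \<le> Inv_j \<sigma>' m"
    using smooth_in_Sn[OF sm \<omega>] smooth_Inv_j_mono[OF sm \<omega>] by auto
  have "\<not> (\<forall>j\<in>{1..n}. Inv_j \<sigma> j = Inv_j \<sigma>' j)"
    using permutes_eq_if_Inv_j_eq[of \<sigma> n \<sigma>'] S \<open>\<sigma> \<noteq> \<sigma>'\<close> unfolding Sn_def by blast
  then obtain j where j: "j \<in> {1..n}" "Inv_j \<sigma> j \<noteq> Inv_j \<sigma>' j" by blast
  with mono have "Inv_j \<sigma> j < Inv_j \<sigma>' j" by (simp add: order_less_le)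
  then have "code_step n \<sigma> \<sigma>' j"
    using smooth_jump_code_step[OF sm \<omega> _ _ jump' j(1)] \<open>0 < u\<close> \<open>u < t\<close> \<open>M u \<omega> = \<sigma>\<close> \<open>M t \<omega> = \<sigma>'\<close>
    by simp
  with j(1) show ?thesis using hypercube_iff_code_step[OF S] by blast
qed

lemma hypercube_sym: "(\<sigma>, \<sigma>') \<in> hypercube n \<Longrightarrow> (\<sigma>', \<sigma>) \<in> hypercube n"
  unfolding hypercube_def by (auto simp: abs_minus_commute)

lemma trans_graph_subset_hypercube: "smooth P n M \<Longrightarrow> trans_graph P M \<subseteq> hypercube n"
  unfolding trans_graph_def using smooth_jump_event_hypercube hypercube_sym by blast

text \<open>Starting at the identity, the code entry \<open>i + 1\<close> can only reach the value \<open>1\<close> of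
  \<open>(i i+1)\<close> by a jump from a permutation whose code vanishes at \<open>i\<close> and \<open>i + 1\<close>; such a jump
  is right multiplication by \<open>(i i+1)\<close>.\<close>
lemma smooth_path_id_to_adjacent_jumps:
  assumes sm: "smooth P n M" and \<omega>: "\<omega> \<in> space P" and i: "1 \<le> i" "i + 1 \<le> n"
    and M0: "M 0 \<omega> = id" and M1: "M 1 \<omega> = Transposition.transpose i (i + 1)"
  shows "\<exists>t>0. \<exists>\<sigma>\<in>Sn n. left_lim (\<lambda>u. M u \<omega>) t \<sigma> \<and> M t \<omega> = \<sigma> \<circ> Transposition.transpose i (i + 1)"
proof -
  have i1: "i + 1 \<in> {1..n}" using i by simp
  obtain u s where us: "0 \<le> u" "u < s" "s \<le> 1" "left_lim (\<lambda>t. M t \<omega>) s (M u \<omega>)"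
    and "Inv_j (M u \<omega>) (i + 1) = 0" and step: "code_step n (M u \<omega>) (M s \<omega>) (i + 1)"
    by (rule smooth_upcrossing[OF sm \<omega> i1 order_refl zero_less_one, of 0])
      (use M0 M1 Inv_j_adjacent_transpose[OF i(1)] in auto)
  moreover have "Inv_j (M u \<omega>) i = 0"
    using smooth_Inv_j_mono[OF sm \<omega> _ \<open>0 \<le> u\<close>, of i 1] us i M1 Inv_j_adjacent_transpose[OF i(1)]
    by simp
  moreover have "M u \<omega> \<in> Sn n" "M s \<omega> \<in> Sn n" using us smooth_in_Sn[OF sm \<omega>] by auto
  ultimately have "M s \<omega> = M u \<omega> \<circ> Transposition.transpose i (i + 1)"
    by (intro code_step_adjacent[OF _ _ i step]) (auto simp: Sn_def)
  with us \<open>M u \<omega> \<in> Sn n\<close> show ?thesis by (intro exI[of _ s]) auto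
qed

lemma adjacent_transposition_in_generator:
  assumes sm: "smooth P n M" and i: "1 \<le> i" "i + 1 \<le> n"
  shows "Transposition.transpose i (i + 1) \<in> generator (trans_graph P M)"
proof (rule ccontr)
  define \<tau> where "\<tau> = Transposition.transpose i (i + 1)"
  assume "Transposition.transpose i (i + 1) \<notin> generator (trans_graph P M)"
  then have not_gen: "\<tau> \<notin> generator (trans_graph P M)" by (simp add: \<tau>_def)
  note mp = smooth_imp_mallows_process[OF sm]
  interpret prob_space P using mp by (simp add: mallows_process_def)
  have no_jump: "\<not> jump_event P M \<sigma> (\<sigma> \<circ> \<tau>)" if "\<sigma> \<in> Sn n" for \<sigma>
  proof
    assume jump: "jump_event P M \<sigma> (\<sigma> \<circ> \<tau>)"
    have \<sigma>: "\<sigma> permutes {1..n}" using that by (simp add: Sn_def)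
    have "(\<sigma> \<circ> \<tau>) (i + 1) \<noteq> \<sigma> (i + 1)"
      using permutes_inj[OF \<sigma>] by (simp add: \<tau>_def inj_eq)
    then have "\<sigma> \<noteq> \<sigma> \<circ> \<tau>" by metis
    then have "(\<sigma>, \<sigma> \<circ> \<tau>) \<in> trans_graph P M" using jump by (simp add: trans_graph_def)
    with not_gen show False using comp_mem_generator permutes_bij[OF \<sigma>] by blast
  qed
  have "AE \<omega> in P. \<forall>\<sigma>\<in>Sn n. \<not> (\<exists>t>0. left_lim (\<lambda>u. M u \<omega>) t \<sigma> \<and> M t \<omega> = \<sigma> \<circ> \<tau>)"
    using no_jump finite_Sn unfolding jump_event_def by (intro AE_finite_allI) auto
  moreover have "AE \<omega> in P. M 0 \<omega> = id"
    using mallows_process_event[OF mp order_refl, of "\<lambda>\<rho>. \<rho> = id"]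
    by (simp add: prob_Collect_eq_1 mallows_prob_singleton[OF id_in_Sn] mallows_0_id)
  ultimately have "AE \<omega> in P. M 1 \<omega> \<noteq> \<tau>"
    using AE_space
  proof eventually_elim
    case (elim \<omega>)
    then show "M 1 \<omega> \<noteq> \<tau>"
      using smooth_path_id_to_adjacent_jumps[OF sm elim(3) i elim(2)] unfolding \<tau>_def by blast
  qed
  then have "measure P {\<omega>\<in>space P. M 1 \<omega> = \<tau>} = 0" by (rule prob_eq_0_AE)
  moreover have "\<tau> \<in> Sn n" using i by (auto simp: Sn_def \<tau>_def intro: permutes_swap_id)
  ultimately show False
    using mallows_process_event(2)[OF mp, of 1 "\<lambda>\<rho>. \<rho> = \<tau>"] mallows_pos[of 1 n \<tau>]
    by (simp add: mallows_prob_singleton)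
qed

section \<open>Jumps of regular processes\<close>

lemma continuous_on_ex_strict_drop:
  fixes F :: "real \<Rightarrow> real"
  assumes cont: "continuous_on {0..} F" and drop: "F 1 < F 0"
  obtains a where "0 < a" "a < 1" "\<And>b. a < b \<Longrightarrow> b \<le> 1 \<Longrightarrow> F b < F a"
proof -
  have "(F \<longlongrightarrow> F 0) (at_right 0)"
    using cont by (auto simp: continuous_on_def intro: tendsto_within_subset)
  then have "\<forall>\<^sub>F t in at_right 0. F 1 < F t \<and> t \<in> {0<..<1}"
    using drop by (intro eventually_conj order_tendstoD(1) eventually_at_right_real) auto
  then obtain a0 where a0: "0 < a0" "a0 < 1" "F 1 < F a0"
    using eventually_happens'[of "at_right (0::real)"] by auto
  define S where "S = {t\<in>{a0..1}. F a0 \<le> F t}"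
  define a where "a = Sup S"
  have "closed S" unfolding S_def using a0
    by (intro continuous_on_closed_Collect_le continuous_on_const continuous_on_subset[OF cont]) auto
  moreover have bdd: "bdd_above S" by (auto simp: S_def bdd_above_def)
  moreover have "a0 \<in> S" using a0 by (simp add: S_def)
  ultimately have "a \<in> S" unfolding a_def by (intro closed_contains_Sup) auto
  then have a: "a0 \<le> a" "a \<le> 1" "F a0 \<le> F a" by (auto simp: S_def)
  show ?thesis
  proof
    show "0 < a" "a < 1" using a a0 by (auto simp: order.order_iff_strict)
    show "F b < F a" if "a < b" "b \<le> 1" for b
    proof -
      have "b \<notin> S" using cSup_upper[OF _ bdd, of b] that by (auto simp: a_def)
      then show ?thesis using that a by (auto simp: S_def)
    qed
  qed
qed

text \<open>As \<open>\<sigma>'\<close> lies above the level \<open>c = Inv_j \<sigma> j\<close>, the probability that entry \<open>j\<close> is at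
  most \<open>c\<close> is smaller at time \<open>1\<close> than at time \<open>0\<close>; \<open>a\<close> is a last time at which it is as large
  as at some time near \<open>0\<close>, so it drops strictly right after \<open>a\<close>.  Then \<open>b\<close> is taken so close
  to \<open>a\<close> that, by continuity, the gap between the probabilities of \<open>Inv_j \<rho> k < Inv_j \<sigma> k\<close> and
  \<open>Inv_j \<rho> k \<le> Inv_j \<sigma> k\<close> at time \<open>a\<close> survives when the latter is evaluated at \<open>b\<close>.\<close>
lemma mallows_jump_times:
  assumes \<sigma>: "\<sigma> \<in> Sn n" and \<sigma>': "\<sigma>' \<in> Sn n" and less: "Inv_j \<sigma> j < Inv_j \<sigma>' j"
  obtains a b where "0 < a" "a < b"
    "mallows_prob n (\<lambda>\<rho>. Inv_j \<rho> j \<le> Inv_j \<sigma> j) b < mallows_prob n (\<lambda>\<rho>. Inv_j \<rho> j \<le> Inv_j \<sigma> j) a"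
    "\<And>k. k \<in> {1..n} \<Longrightarrow>
       mallows_prob n (\<lambda>\<rho>. Inv_j \<rho> k < Inv_j \<sigma> k) a < mallows_prob n (\<lambda>\<rho>. Inv_j \<rho> k \<le> Inv_j \<sigma> k) b"
proof -
  define F where "F = mallows_prob n (\<lambda>\<rho>. Inv_j \<rho> j \<le> Inv_j \<sigma> j)"
  have "mallows n 0 id \<le> F 0"
    unfolding F_def by (rule mallows_le_mallows_prob) (simp_all add: id_in_Sn)
  moreover have "mallows_prob n (\<lambda>_. True) 1 = F 1 + mallows_prob n (\<lambda>\<rho>. \<not> Inv_j \<rho> j \<le> Inv_j \<sigma> j) 1"
    unfolding F_def by (rule mallows_prob_disj) auto
  moreover have "mallows n 1 \<sigma>' \<le> mallows_prob n (\<lambda>\<rho>. \<not> Inv_j \<rho> j \<le> Inv_j \<sigma> j) 1"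
    using \<sigma>' less by (intro mallows_le_mallows_prob) auto
  ultimately have "F 1 < F 0"
    using mallows_prob_1_True[of n] mallows_0_id[of n] mallows_pos[of 1 n \<sigma>'] by simp
  moreover have "continuous_on {0..} F" unfolding F_def by (rule continuous_on_mallows_prob)
  ultimately obtain a where a: "0 < a" "a < 1" and drop: "\<And>b. a < b \<Longrightarrow> b \<le> 1 \<Longrightarrow> F b < F a"
    using continuous_on_ex_strict_drop by blast
  define Le where "Le k = mallows_prob n (\<lambda>\<rho>. Inv_j \<rho> k \<le> Inv_j \<sigma> k)" for k
  define Lt where "Lt k = mallows_prob n (\<lambda>\<rho>. Inv_j \<rho> k < Inv_j \<sigma> k)" for k
  have "Lt k a < Le k a" for k
  proof -
    have "Le k a = Lt k a + mallows_prob n (\<lambda>\<rho>. Inv_j \<rho> k = Inv_j \<sigma> k) a"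
      unfolding Le_def Lt_def by (rule mallows_prob_disj) auto
    moreover have "mallows n a \<sigma> \<le> mallows_prob n (\<lambda>\<rho>. Inv_j \<rho> k = Inv_j \<sigma> k) a"
      using \<sigma> a by (intro mallows_le_mallows_prob) auto
    ultimately show ?thesis using mallows_pos[OF a(1), of n \<sigma>] by linarith
  qed
  moreover have "(Le k \<longlongrightarrow> Le k a) (at_right a)" for k
  proof -
    have "(Le k \<longlongrightarrow> Le k a) (at a within {0..})"
      using continuous_on_mallows_prob a(1) by (simp add: Le_def continuous_on_def)
    then show ?thesis by (rule tendsto_within_subset) (use a(1) in auto)
  qed
  ultimately have "\<forall>\<^sub>F b in at_right a. (\<forall>k\<in>{1..n}. Lt k a < Le k b) \<and> b \<in> {a<..<1}"
    using a by (intro eventually_conj eventually_ball_finite ballI order_tendstoD(1) eventually_at_right_real) auto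
  then obtain b where "\<forall>k\<in>{1..n}. Lt k a < Le k b" "a < b" "b < 1"
    using eventually_happens'[of "at_right a"] by auto
  with a drop[of b] show ?thesis by (intro that[of a b]) (auto simp: F_def Le_def Lt_def)
qed

lemma regular_prob_Inter:
  assumes reg: "regular P n M" and "0 \<le> a" "0 \<le> b" "0 < n"
  shows "measure P (\<Inter>k\<in>{1..n}. {\<omega>\<in>space P. R k (Inv_j (M a \<omega>) k) (Inv_j (M b \<omega>) k)}) =
    (\<Prod>k\<in>{1..n}. measure P {\<omega>\<in>space P. R k (Inv_j (M a \<omega>) k) (Inv_j (M b \<omega>) k)})"
proof -
  interpret prob_space P
    using reg by (simp add: regular_def smooth_def strongly_monotone_def mallows_process_def)
  define X where "X = (\<lambda>k \<omega>. restrict (\<lambda>t. Inv_j (M t \<omega>) k) {0..})"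
  define B where "B k = {f \<in> space (PiM {0::real..} (\<lambda>_. count_space UNIV)). R k (f a) (f b)}" for k
  have "indep_vars (\<lambda>_. PiM {0..} (\<lambda>_. count_space UNIV)) X {1..n}"
    using reg by (simp add: regular_def X_def)
  moreover have "B k \<in> sets (PiM {0..} (\<lambda>_. count_space UNIV))" for k
    unfolding B_def using assms(2,3) by (intro pred_PiM_count_space_two_components) auto
  ultimately have "prob (\<Inter>k\<in>{1..n}. X k -` B k \<inter> space P) = (\<Prod>k\<in>{1..n}. prob (X k -` B k \<inter> space P))"
    using \<open>0 < n\<close> by (intro indep_varsD_finite) auto
  moreover have "X k -` B k \<inter> space P = {\<omega>\<in>space P. R k (Inv_j (M a \<omega>) k) (Inv_j (M b \<omega>) k)}" for k
    using assms(2,3) by (auto simp: X_def B_def space_PiM)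
  ultimately show ?thesis by simp
qed

lemma smooth_path_jumps_between:
  assumes sm: "smooth P n M" and \<omega>: "\<omega> \<in> space P" and S: "\<sigma> \<in> Sn n" "\<sigma>' \<in> Sn n"
    and j: "j \<in> {1..n}" and step: "code_step n \<sigma> \<sigma>' j" and "0 \<le> a" "a < b"
    and crossing: "Inv_j (M a \<omega>) j \<le> Inv_j \<sigma> j" "Inv_j \<sigma> j < Inv_j (M b \<omega>) j"
    and staying: "\<And>k. k \<in> {1..n} \<Longrightarrow> k \<noteq> j \<Longrightarrow>
      Inv_j \<sigma> k \<le> Inv_j (M a \<omega>) k \<and> Inv_j (M b \<omega>) k \<le> Inv_j \<sigma> k"
  shows "\<exists>t>0. left_lim (\<lambda>u. M u \<omega>) t \<sigma> \<and> M t \<omega> = \<sigma>'"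
proof -
  obtain u s where us: "a \<le> u" "u < s" "s \<le> b" "left_lim (\<lambda>t. M t \<omega>) s (M u \<omega>)"
    and at_j: "Inv_j (M u \<omega>) j = Inv_j \<sigma> j" and step': "code_step n (M u \<omega>) (M s \<omega>) j"
    using smooth_upcrossing[OF sm \<omega> j \<open>0 \<le> a\<close> \<open>a < b\<close> crossing] by blast
  have in_Sn: "M u \<omega> \<in> Sn n" "M s \<omega> \<in> Sn n" using us \<open>0 \<le> a\<close> smooth_in_Sn[OF sm \<omega>] by auto
  have "Inv_j (M u \<omega>) k = Inv_j \<sigma> k" if "k \<in> {1..n}" for k
  proof (cases "k = j")
    case False
    have "Inv_j (M a \<omega>) k \<le> Inv_j (M u \<omega>) k" "Inv_j (M u \<omega>) k \<le> Inv_j (M b \<omega>) k"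
      using us \<open>0 \<le> a\<close> by (auto intro: smooth_Inv_j_mono[OF sm \<omega> that])
    with staying[OF that False] show ?thesis by simp
  qed (use at_j in simp)
  then have "M u \<omega> = \<sigma>" using in_Sn S by (intro permutes_eq_if_Inv_j_eq) (auto simp: Sn_def)
  moreover have "M s \<omega> = \<sigma>'"
    using step step' in_Sn S \<open>M u \<omega> = \<sigma>\<close> by (intro code_step_unique) (auto simp: Sn_def)
  ultimately show ?thesis using us \<open>0 \<le> a\<close> by (intro exI[of _ s]) auto
qed

text \<open>At the times of \<open>mallows_jump_times\<close>, each code entry behaves as required by
  \<open>smooth_path_jumps_between\<close> with positive probability, hence by independence all entries do
  at once.\<close>
lemma regular_jump_window_pos:
  assumes reg: "regular P n M" and S: "\<sigma> \<in> Sn n" "\<sigma>' \<in> Sn n"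
    and j: "j \<in> {1..n}" and less: "Inv_j \<sigma> j < Inv_j \<sigma>' j"
  obtains a b where "0 \<le> a" "a < b"
    "0 < measure P {\<omega>\<in>space P. Inv_j (M a \<omega>) j \<le> Inv_j \<sigma> j \<and> Inv_j \<sigma> j < Inv_j (M b \<omega>) j \<and>
       (\<forall>k\<in>{1..n} - {j}. Inv_j \<sigma> k \<le> Inv_j (M a \<omega>) k \<and> Inv_j (M b \<omega>) k \<le> Inv_j \<sigma> k)}"
proof -
  have mp: "mallows_process P n M" using reg by (simp add: regular_def smooth_imp_mallows_process)
  obtain a b where ab: "0 < a" "a < b"
    and cross: "mallows_prob n (\<lambda>\<rho>. Inv_j \<rho> j \<le> Inv_j \<sigma> j) b < mallows_prob n (\<lambda>\<rho>. Inv_j \<rho> j \<le> Inv_j \<sigma> j) a"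
    and stay: "\<And>k. k \<in> {1..n} \<Longrightarrow>
      mallows_prob n (\<lambda>\<rho>. Inv_j \<rho> k < Inv_j \<sigma> k) a < mallows_prob n (\<lambda>\<rho>. Inv_j \<rho> k \<le> Inv_j \<sigma> k) b"
    using mallows_jump_times[OF S less] by blast
  define R where "R k x y \<longleftrightarrow> (if k = j then x \<le> Inv_j \<sigma> j \<and> \<not> y \<le> Inv_j \<sigma> j
    else y \<le> Inv_j \<sigma> k \<and> \<not> x < Inv_j \<sigma> k)" for k x y
  define A where "A k = {\<omega>\<in>space P. R k (Inv_j (M a \<omega>) k) (Inv_j (M b \<omega>) k)}" for k
  have "0 < measure P (A k)" if "k \<in> {1..n}" for k
  proof (cases "k = j")
    case True
    then show ?thesis
      using mallows_process_prob_pos[OF mp _ _ cross] ab by (simp add: A_def R_def)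
  next
    case False
    then show ?thesis
      using mallows_process_prob_pos[OF mp _ _ stay[OF that]] ab
      by (simp add: A_def R_def conj_commute)
  qed
  then have "0 < (\<Prod>k\<in>{1..n}. measure P (A k))" by (intro prod_pos) auto
  then have "0 < measure P (\<Inter>k\<in>{1..n}. A k)"
    using regular_prob_Inter[OF reg, of a b R] ab j by (simp add: A_def)
  moreover have "(\<Inter>k\<in>{1..n}. A k) =
      {\<omega>\<in>space P. Inv_j (M a \<omega>) j \<le> Inv_j \<sigma> j \<and> Inv_j \<sigma> j < Inv_j (M b \<omega>) j \<and>
       (\<forall>k\<in>{1..n} - {j}. Inv_j \<sigma> k \<le> Inv_j (M a \<omega>) k \<and> Inv_j (M b \<omega>) k \<le> Inv_j \<sigma> k)}"
    using j by (auto simp: A_def R_def not_le not_less split: if_splits)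
  ultimately show ?thesis using ab by (intro that[of a b]) auto
qed

lemma regular_jump_event:
  assumes reg: "regular P n M" and S: "\<sigma> \<in> Sn n" "\<sigma>' \<in> Sn n"
    and j: "j \<in> {1..n}" and step: "code_step n \<sigma> \<sigma>' j"
  shows "jump_event P M \<sigma> \<sigma>'"
proof (rule ccontr)
  assume "\<not> jump_event P M \<sigma> \<sigma>'"
  then have no_jump: "AE \<omega> in P. \<not> (\<exists>t>0. left_lim (\<lambda>u. M u \<omega>) t \<sigma> \<and> M t \<omega> = \<sigma>')"
    by (simp add: jump_event_def)
  have sm: "smooth P n M" using reg by (simp add: regular_def)
  interpret prob_space P using smooth_imp_mallows_process[OF sm] by (simp add: mallows_process_def)
  have "Inv_j \<sigma> j < Inv_j \<sigma>' j" using step j by (simp add: code_step_def)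
  then obtain a b where ab: "0 \<le> a" "a < b" and pos: "0 < \<P>(\<omega> in P. Inv_j (M a \<omega>) j \<le> Inv_j \<sigma> j \<and>
      Inv_j \<sigma> j < Inv_j (M b \<omega>) j \<and>
      (\<forall>k\<in>{1..n} - {j}. Inv_j \<sigma> k \<le> Inv_j (M a \<omega>) k \<and> Inv_j (M b \<omega>) k \<le> Inv_j \<sigma> k))"
    using regular_jump_window_pos[OF reg S j] by blast
  have "AE \<omega> in P. \<not> (Inv_j (M a \<omega>) j \<le> Inv_j \<sigma> j \<and> Inv_j \<sigma> j < Inv_j (M b \<omega>) j \<and>
      (\<forall>k\<in>{1..n} - {j}. Inv_j \<sigma> k \<le> Inv_j (M a \<omega>) k \<and> Inv_j (M b \<omega>) k \<le> Inv_j \<sigma> k))"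
    using no_jump AE_space
  proof eventually_elim
    case (elim \<omega>)
    then show ?case using smooth_path_jumps_between[OF sm elim(2) S j step ab] by blast
  qed
  with pos show False by (simp add: prob_eq_0_AE)
qed

lemma hypercube_subset_trans_graph:
  assumes reg: "regular P n M"
  shows "hypercube n \<subseteq> trans_graph P M"
proof safe
  fix \<sigma> \<sigma>' assume edge: "(\<sigma>, \<sigma>') \<in> hypercube n"
  then have S: "\<sigma> \<in> Sn n" "\<sigma>' \<in> Sn n" by (auto simp: hypercube_def)
  then obtain j where j: "j \<in> {1..n}" and step: "code_step n \<sigma> \<sigma>' j \<or> code_step n \<sigma>' \<sigma> j"
    using edge hypercube_iff_code_step by blast
  then have "Inv_j \<sigma>' j = Inv_j \<sigma> j + 1 \<or> Inv_j \<sigma> j = Inv_j \<sigma>' j + 1"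
    by (auto simp: code_step_def)
  then have "\<sigma> \<noteq> \<sigma>'" by auto
  moreover have "jump_event P M \<sigma> \<sigma>' \<or> jump_event P M \<sigma>' \<sigma>"
    using step regular_jump_event[OF reg S j] regular_jump_event[OF reg S(2,1) j] by blast
  ultimately show "(\<sigma>, \<sigma>') \<in> trans_graph P M" by (simp add: trans_graph_def)
qed

lemma generator_mono: "E \<subseteq> F \<Longrightarrow> generator E \<subseteq> generator F"
  unfolding generator_def by blast

theorem theorem2:
  fixes P :: "'a measure" and n :: nat and M :: "real \<Rightarrow> 'a \<Rightarrow> perm_n"
  assumes "smooth P n M"
  shows "trans_graph P M \<subseteq> hypercube n \<and>
         adj_transpositions n \<subseteq> generator (trans_graph P M) \<and>
         generator (trans_graph P M) \<subseteq> transpositions n \<and>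
         (regular P n M \<longrightarrow>
           trans_graph P M = hypercube n \<and>
           generator (trans_graph P M) = generator (hypercube n) \<and>
           generator (hypercube n) = transpositions n)"
proof -
  have sub: "trans_graph P M \<subseteq> hypercube n"
    using assms by (rule trans_graph_subset_hypercube)
  moreover have "adj_transpositions n \<subseteq> generator (trans_graph P M)"
    using adjacent_transposition_in_generator[OF assms] by (auto simp: adj_transpositions_def)
  moreover have "generator (trans_graph P M) \<subseteq> transpositions n"
    using generator_mono[OF sub] by (simp add: generator_hypercube)
  moreover have "trans_graph P M = hypercube n" if "regular P n M"
    using sub hypercube_subset_trans_graph[OF that] by blast
  ultimately show ?thesis by (simp add: generator_hypercube)
qed

end
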